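(* Let $p$ be a prime and $m$ a positive integer with $m+2\le p$. Let $B$ be a finite left brace with $(B,+)\cong \mathbb{Z}/(p^{\alpha_1})\times\cdots\times\mathbb{Z}/(p^{\alpha_m})$ for integers $1\le\alpha_1\le\cdots\le\alpha_m$. For $i\ge 0$ let $\Omega_i(B,+)=\{x\in B: p^ix=0\}$. Then for every $i\ge1$ and every $a\in\Omega_{i+1}(B,+)\setminus\Omega_i(B,+)$, the $p$-th power $a^p$ of $a$ in $(B,\cdot)$ satisfies $a^p\in\Omega_i(B,+)\setminus\Omega_{i-1}(B,+)$.
   Context: A left brace is a set $B$ with two binary operations $+$ and $\cdot$ such that $(B,+)$ is an abelian group, $(B,\cdot)$ is a group, and $a\cdot(b+c)+a=a\cdot b+a\cdot c$ for all $a,b,c\in B$. $a^p$ denotes $a\cdot a\cdots a$ ($p$ factors) in $(B,\cdot)$. *)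

theory Defs
  imports "HOL-Algebra.Algebra"
begin

text \<open>A left brace: two group structures A (additive, written multiplicatively in
HOL-Algebra, abelian) and M (multiplicative) on the same carrier, with
a(b+c)+a = ab+ac.\<close>

definition left_brace :: "('a, 'b) monoid_scheme \<Rightarrow> ('a, 'c) monoid_scheme \<Rightarrow> bool" where
  "left_brace A M \<longleftrightarrow> comm_group A \<and> group M \<and> carrier M = carrier A \<and>
     (\<forall>a\<in>carrier A. \<forall>b\<in>carrier A. \<forall>c\<in>carrier A.
        (a \<otimes>\<^bsub>M\<^esub> (b \<otimes>\<^bsub>A\<^esub> c)) \<otimes>\<^bsub>A\<^esub> a
          = (a \<otimes>\<^bsub>M\<^esub> b) \<otimes>\<^bsub>A\<^esub> (a \<otimes>\<^bsub>M\<^esub> c))"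

definition Omega :: "('a, 'b) monoid_scheme \<Rightarrow> nat \<Rightarrow> nat \<Rightarrow> 'a set" where
  "Omega A p i = {x \<in> carrier A. x [^]\<^bsub>A\<^esub> (p ^ i) = \<one>\<^bsub>A\<^esub>}"

end

theory Submission
  imports Defs
begin

(* Write B additively and let \<lambda>_a(x) = -a + ax, so that a \<mapsto> \<lambda>_a is a homomorphism from
   (B, \<cdot>) to Aut(B, +) and a^n = a + \<lambda>_a(a) + ... + \<lambda>_a^(n-1)(a). Expanding \<lambda>_a = 1 + g
   gives a^n = \<Sum>_j (n choose j+1) g^j(a). Since \<lambda>_a has p-power order, g is nilpotent on the
   p-torsion \<Omega>_1, which has at most p^m elements; the images g^k(\<Omega>_1) shrink by a factor
   p until they vanish, so g^m = 0 on \<Omega>_1.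
   Now let a have additive order p^(i+1) and put y = p^i a \<in> \<Omega>_1 - {0}. All middle binomial
   coefficients of the expansion of p^i a^p are divisible by p, leaving p^i a^p = g^(p-1)(y) = 0
   because p - 1 \<ge> m. For z = p^(i-1) a choose d with y \<in> g^d(\<Omega>_1) - g^(d+1)(\<Omega>_1); modulo
   g^(d+1)(\<Omega>_1) the same expansion gives p^(i-1) a^p \<equiv> y + g^(p-1)(z) \<equiv> y, the last step using
   p \<ge> m + 2, so p^(i-1) a^p \<noteq> 0. *)

section \<open>Iterates of group endomorphisms\<close>

lemma funpow_eq_on:
  assumes "\<forall>x\<in>E. \<phi> x = \<psi> x" and "\<forall>x\<in>E. \<phi> x \<in> E" and "x \<in> E"
  shows "(\<phi> ^^ k) x = (\<psi> ^^ k) x"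
proof -
  have "(\<phi> ^^ k) x = (\<psi> ^^ k) x \<and> (\<phi> ^^ k) x \<in> E"
    by (induction k) (use assms in auto)
  then show ?thesis by simp
qed

lemma ex_boundary_step: "P 0 \<Longrightarrow> \<not> P m \<Longrightarrow> \<exists>d<m. P d \<and> \<not> P (Suc d)"
  by (induction m) (auto simp: less_Suc_eq)

lemma funpow_image_antimono:
  assumes "g ` S \<subseteq> S" and "k \<le> l"
  shows "(g ^^ l) ` S \<subseteq> (g ^^ k) ` S"
proof -
  have "(g ^^ j) ` S \<subseteq> S" for j
    by (induction j) (use assms(1) in \<open>auto simp: image_comp[symmetric]\<close>)
  then have "(g ^^ k) ` (g ^^ (l - k)) ` S \<subseteq> (g ^^ k) ` S" by blast
  then show ?thesis using assms(2) by (simp add: image_comp funpow_add[symmetric])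
qed

context group
begin

lemma subgroup_nat_pow_closed:
  "subgroup H G \<Longrightarrow> y \<in> H \<Longrightarrow> y [^] (n::nat) \<in> H"
  by (induction n) (auto intro: subgroup.m_closed subgroup.one_closed)

lemma hom_funpow: "f \<in> hom G G \<Longrightarrow> f ^^ n \<in> hom G G"
proof (induction n)
  case 0
  then show ?case by (simp add: hom_def)
next
  case (Suc n)
  then show ?case using Group.hom_compose[of "f ^^ n" G G f G] by (simp add: comp_def)
qed

lemma funpow_closed: "f \<in> hom G G \<Longrightarrow> x \<in> carrier G \<Longrightarrow> (f ^^ n) x \<in> carrier G"
  by (rule hom_in_carrier[OF hom_funpow])

lemma subgroup_funpow_image:
  "g \<in> hom G G \<Longrightarrow> subgroup S G \<Longrightarrow> subgroup ((g ^^ k) ` S) G"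
  by (rule group_hom.subgroup_img_is_subgroup)
     (auto simp: group_hom_def group_hom_axioms_def hom_funpow is_group)

lemma card_subgroup_prime_power:
  assumes "card (carrier G) = p ^ n" and p: "Factorial_Ring.prime p" and "subgroup H G"
  shows "\<exists>e. card H = p ^ e"
proof -
  have "card H dvd p ^ n"
    using lagrange[OF assms(3)] assms(1) unfolding order_def by (metis dvd_triv_right)
  then show ?thesis using divides_primepow_nat[OF p] by blast
qed

lemma funpow_image_stable:
  assumes g: "g \<in> hom G G" and S: "subgroup S G" and S_inv: "g ` S \<subseteq> S"
    and nil: "\<forall>x\<in>S. (g ^^ K) x = \<one>" and stable: "(g ^^ Suc k) ` S = (g ^^ k) ` S"
  shows "(g ^^ k) ` S = {\<one>}"
proof -
  have step: "(g ^^ Suc j) ` S = g ` (g ^^ j) ` S" for j by (simp add: image_comp)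
  have "(g ^^ (k + j)) ` S = (g ^^ k) ` S" for j
    by (induction j) (simp_all only: add_0_right add_Suc_right step stable[unfolded step])
  then have "(g ^^ k) ` S = (g ^^ (k + K)) ` S" by simp
  also have "\<dots> \<subseteq> (g ^^ K) ` S" by (rule funpow_image_antimono[OF S_inv]) simp
  also have "\<dots> \<subseteq> {\<one>}" using nil by blast
  finally show ?thesis using subgroup.one_closed[OF subgroup_funpow_image[OF g S, of k]] by blast
qed

text \<open>A strict inclusion of subgroups of a p-group loses a factor of at least p.\<close>

lemma card_funpow_image:
  assumes fin: "finite (carrier G)" and card_G: "card (carrier G) = p ^ n"
    and p: "Factorial_Ring.prime p"
    and g: "g \<in> hom G G" and S: "subgroup S G" and S_inv: "g ` S \<subseteq> S"
    and nil: "\<forall>x\<in>S. (g ^^ K) x = \<one>"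
  shows "(g ^^ k) ` S = {\<one>} \<or> card ((g ^^ k) ` S) * p ^ k \<le> card S"
proof (induction k)
  case 0
  then show ?case by simp
next
  case (Suc k)
  define W where "W j = (g ^^ j) ` S" for j
  have W_subgroup: "subgroup (W j) G" for j
    unfolding W_def by (rule subgroup_funpow_image[OF g S])
  have W_Suc: "W (Suc k) \<subseteq> W k"
    unfolding W_def by (rule funpow_image_antimono[OF S_inv]) simp
  consider "W (Suc k) = W k" | "W k = {\<one>}" | "W (Suc k) \<subset> W k" "W k \<noteq> {\<one>}"
    using W_Suc by blast
  then show ?case
  proof cases
    case 1
    then have "W (Suc k) = {\<one>}" using funpow_image_stable[OF g S S_inv nil] W_def by simp
    then show ?thesis unfolding W_def by blast
  next
    case 2
    then have "W (Suc k) = {\<one>}" using W_Suc subgroup.one_closed[OF W_subgroup] by blast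
    then show ?thesis unfolding W_def by blast
  next
    case 3
    obtain a b where a: "card (W (Suc k)) = p ^ a" and b: "card (W k) = p ^ b"
      using card_subgroup_prime_power[OF card_G p W_subgroup] by metis
    have "card (W (Suc k)) < card (W k)"
      using 3(1) finite_subset[OF subgroup.subset[OF W_subgroup] fin] by (rule psubset_card_mono[rotated])
    then have "a < b" using a b prime_gt_1_nat[OF p] power_less_imp_less_exp by fastforce
    then have "card (W (Suc k)) * p \<le> card (W k)"
      using a b prime_gt_1_nat[OF p] by (metis Suc_leI power_Suc2 power_increasing less_imp_le)
    then have "card (W (Suc k)) * p ^ Suc k \<le> card (W k) * p ^ k"
      by (simp add: mult.assoc[symmetric])
    also have "\<dots> \<le> card S" using Suc 3(2) W_def by simp
    finally show ?thesis unfolding W_def by blast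
  qed
qed

lemma funpow_image_eq_one:
  assumes "finite (carrier G)" and "card (carrier G) = p ^ n" and p: "Factorial_Ring.prime p"
    and g: "g \<in> hom G G" and S: "subgroup S G" and "g ` S \<subseteq> S"
    and "\<forall>x\<in>S. (g ^^ K) x = \<one>" and card_S: "card S \<le> p ^ m"
  shows "(g ^^ m) ` S = {\<one>}"
proof (rule ccontr)
  let ?W = "(g ^^ m) ` S"
  assume ne: "?W \<noteq> {\<one>}"
  then have "card ?W * p ^ m \<le> card S" using card_funpow_image[OF assms(1-7), of m] by blast
  then have "card ?W * p ^ m \<le> 1 * p ^ m" using card_S by (simp only: mult_1_left order.trans)
  then have "card ?W \<le> Suc 0" using prime_gt_0_nat[OF p] by (simp only: mult_le_cancel2) simp
  moreover have "finite ?W"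
    using finite_subset[OF subgroup.subset[OF S] assms(1)] by simp
  moreover have "\<one> \<in> ?W" using subgroup.one_closed[OF subgroup_funpow_image[OF g S]] .
  ultimately have "?W = {\<one>}" using card_le_Suc0_iff_eq by blast
  with ne show False ..
qed

end

section \<open>The endomorphisms f - 1 on an abelian p-group\<close>

text \<open>Writing the abelian group G additively, diff_id G f is the endomorphism f - 1 and
  orbit_sum G f n x = x + f x + ... + f^(n-1) x.\<close>

definition diff_id :: "('a, 'b) monoid_scheme \<Rightarrow> ('a \<Rightarrow> 'a) \<Rightarrow> 'a \<Rightarrow> 'a" where
  "diff_id G f x = f x \<otimes>\<^bsub>G\<^esub> inv\<^bsub>G\<^esub> x"

primrec orbit_sum :: "('a, 'b) monoid_scheme \<Rightarrow> ('a \<Rightarrow> 'a) \<Rightarrow> nat \<Rightarrow> 'a \<Rightarrow> 'a" where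
  "orbit_sum G f 0 x = \<one>\<^bsub>G\<^esub>"
| "orbit_sum G f (Suc n) x = orbit_sum G f n x \<otimes>\<^bsub>G\<^esub> (f ^^ n) x"

context comm_group
begin

lemma subgroup_Omega: "subgroup (Omega G p i) G"
  by (auto simp: Omega_def subgroup_def nat_pow_distrib nat_pow_inv)

lemma hom_Omega:
  assumes "h \<in> hom G G" and "x \<in> Omega G p i"
  shows "h x \<in> Omega G p i"
  using assms hom_nat_pow[OF assms(1) _ is_group is_group, symmetric] hom_one[OF assms(1) is_group is_group]
  by (auto simp: Omega_def hom_in_carrier)

lemma diff_id_hom: "f \<in> hom G G \<Longrightarrow> diff_id G f \<in> hom G G"
  unfolding hom_def diff_id_def
  by (auto simp: hom_in_carrier hom_mult inv_mult m_ac Pi_iff)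

lemma diff_id_closed: "f \<in> hom G G \<Longrightarrow> x \<in> carrier G \<Longrightarrow> diff_id G f x \<in> carrier G"
  by (simp add: diff_id_def hom_in_carrier)

lemma diff_id_mult_self: "f \<in> hom G G \<Longrightarrow> x \<in> carrier G \<Longrightarrow> diff_id G f x \<otimes> x = f x"
  by (simp add: diff_id_def hom_in_carrier m_assoc)

lemma orbit_sum_closed: "f \<in> hom G G \<Longrightarrow> x \<in> carrier G \<Longrightarrow> orbit_sum G f n x \<in> carrier G"
  by (induction n) (auto intro: hom_in_carrier hom_funpow)

lemma orbit_sum_Suc_left:
  assumes f: "f \<in> hom G G" and x: "x \<in> carrier G"
  shows "orbit_sum G f (Suc n) x = x \<otimes> f (orbit_sum G f n x)"
proof (induction n)
  case 0
  then show ?case by (simp add: x hom_one[OF f is_group is_group])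
next
  case (Suc n)
  have "orbit_sum G f (Suc (Suc n)) x = orbit_sum G f (Suc n) x \<otimes> f ((f ^^ n) x)" by simp
  also have "\<dots> = x \<otimes> (f (orbit_sum G f n x) \<otimes> f ((f ^^ n) x))"
    using Suc x f by (simp add: m_assoc orbit_sum_closed funpow_closed hom_in_carrier)
  also have "\<dots> = x \<otimes> f (orbit_sum G f (Suc n) x)"
    using hom_mult[OF f] funpow_closed[OF f x] orbit_sum_closed[OF f x] by simp
  finally show ?case .
qed

lemma funpow_eq_orbit_sum:
  assumes f: "f \<in> hom G G" and x: "x \<in> carrier G"
  shows "(f ^^ n) x = x \<otimes> diff_id G f (orbit_sum G f n x)"
proof (induction n)
  case 0
  then show ?case using diff_id_hom[OF f] by (simp add: x hom_one)
next
  case (Suc n)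
  have "(f ^^ Suc n) x = diff_id G f ((f ^^ n) x) \<otimes> (f ^^ n) x"
    using diff_id_mult_self[OF f funpow_closed[OF f x]] by simp
  also have "\<dots> = x \<otimes> (diff_id G f (orbit_sum G f n x) \<otimes> diff_id G f ((f ^^ n) x))"
    using Suc diff_id_closed[OF f] funpow_closed[OF f x] orbit_sum_closed[OF f x] x
    by (simp add: m_ac)
  also have "\<dots> = x \<otimes> diff_id G f (orbit_sum G f (Suc n) x)"
    using hom_mult[OF diff_id_hom[OF f]] funpow_closed[OF f x] orbit_sum_closed[OF f x] by simp
  finally show ?case .
qed

lemma orbit_sum_nat_pow:
  assumes f: "f \<in> hom G G" and x: "x \<in> carrier G"
  shows "orbit_sum G f n x [^] (k::nat) = orbit_sum G f n (x [^] k)"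
proof (induction n)
  case 0
  then show ?case by simp
next
  case (Suc n)
  have "orbit_sum G f (Suc n) x [^] k = orbit_sum G f n x [^] k \<otimes> (f ^^ n) x [^] k"
    using orbit_sum_closed[OF f x] funpow_closed[OF f x] by (simp add: nat_pow_distrib)
  also have "(f ^^ n) x [^] k = (f ^^ n) (x [^] k)"
    using hom_nat_pow[OF hom_funpow[OF f] x is_group is_group] by simp
  finally show ?case using Suc by simp
qed

lemma hom_finprod_atMost:
  assumes h: "h \<in> hom G G" and t: "t \<in> {..n::nat} \<rightarrow> carrier G"
  shows "h (finprod G t {..n}) = finprod G (\<lambda>j. h (t j)) {..n}"
  using t
proof (induction n)
  case 0
  then show ?case using h by (simp add: Pi_iff hom_in_carrier)
next
  case (Suc n)
  have "(\<lambda>j. h (t j)) \<in> {..Suc n} \<rightarrow> carrier G"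
    using Suc.prems h by (auto simp: Pi_iff hom_in_carrier)
  then show ?case using Suc h by (simp add: hom_mult Pi_iff)
qed

lemma subgroup_finprod_atMost:
  assumes H: "subgroup H G" and t: "\<And>j. j \<le> (n::nat) \<Longrightarrow> t j \<in> H"
  shows "finprod G t {..n} \<in> H"
  using t
proof (induction n)
  case 0
  then show ?case using subgroup.subset[OF H] by auto
next
  case (Suc n)
  have "t \<in> {..Suc n} \<rightarrow> carrier G" using Suc.prems subgroup.subset[OF H] by auto
  then show ?case using Suc by (simp add: subgroup.m_closed[OF H])
qed

lemma orbit_sum_binomial:
  assumes f: "f \<in> hom G G" and x: "x \<in> carrier G"
  shows "orbit_sum G f n x = (\<Otimes>j\<in>{..n}. (diff_id G f ^^ j) x [^] (n choose Suc j))"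
proof (induction n)
  case 0
  then show ?case using x by simp
next
  case (Suc n)
  define g where "g = diff_id G f"
  have g: "g \<in> hom G G" using diff_id_hom[OF f] g_def by simp
  have gc: "\<And>j. (g ^^ j) x \<in> carrier G" using funpow_closed[OF g x] .
  define U where "U = (\<Otimes>j\<in>{..n}. (g ^^ Suc j) x [^] (n choose Suc j))"
  have Uc: "U \<in> carrier G"
    unfolding U_def using gc hom_in_carrier[OF g] by (auto intro!: finprod_closed)
  have IH: "orbit_sum G f n x = (\<Otimes>j\<in>{..n}. (g ^^ j) x [^] (n choose Suc j))"
    using Suc g_def by simp
  have "orbit_sum G f (Suc n) x = x \<otimes> (g (orbit_sum G f n x) \<otimes> orbit_sum G f n x)"
    using orbit_sum_Suc_left[OF f x] diff_id_mult_self[OF f orbit_sum_closed[OF f x]] g_def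
    by simp
  also have "g (orbit_sum G f n x) = U"
    unfolding IH U_def
    by (subst hom_finprod_atMost[OF g])
       (auto simp: gc hom_nat_pow[OF g _ is_group is_group] Pi_iff)
  finally have L: "orbit_sum G f (Suc n) x = x \<otimes> (U \<otimes> orbit_sum G f n x)" .
  have "(\<Otimes>j\<in>{..Suc n}. (g ^^ j) x [^] (Suc n choose Suc j))
      = (\<Otimes>j\<in>{..Suc n}. (g ^^ j) x [^] (n choose j) \<otimes> (g ^^ j) x [^] (n choose Suc j))"
    by (intro finprod_cong') (auto simp: gc nat_pow_mult)
  also have "\<dots> = (\<Otimes>j\<in>{..Suc n}. (g ^^ j) x [^] (n choose j))
                 \<otimes> (\<Otimes>j\<in>{..Suc n}. (g ^^ j) x [^] (n choose Suc j))"
    by (rule finprod_multf) (auto simp: gc)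
  also have "(\<Otimes>j\<in>{..Suc n}. (g ^^ j) x [^] (n choose j)) = U \<otimes> x"
    unfolding U_def by (subst finprod_Suc2) (auto simp: gc x)
  also have "(\<Otimes>j\<in>{..Suc n}. (g ^^ j) x [^] (n choose Suc j)) = orbit_sum G f n x"
    unfolding IH by (subst finprod_Suc) (auto simp: gc binomial_eq_0 intro!: finprod_closed)
  finally have R: "(\<Otimes>j\<in>{..Suc n}. (g ^^ j) x [^] (Suc n choose Suc j))
                   = U \<otimes> x \<otimes> orbit_sum G f n x" .
  show ?case using L R Uc x orbit_sum_closed[OF f x] g_def by (simp add: m_ac)
qed

text \<open>Since p divides the binomial coefficient, such a term is a power of an image of x^p.\<close>

lemma binomial_term_mem_subgroup:
  assumes f: "f \<in> hom G G" and x: "x \<in> carrier G" and p: "Factorial_Ring.prime (p::nat)"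
    and H: "subgroup H G" and H_inv: "diff_id G f ` H \<subseteq> H"
    and xp: "diff_id G f (x [^] p) \<in> H" and j: "Suc (Suc j) < p"
  shows "(diff_id G f ^^ Suc j) x [^] (p choose Suc (Suc j)) \<in> H"
proof -
  define g where "g = diff_id G f"
  have g: "g \<in> hom G G" using diff_id_hom[OF f] g_def by simp
  have "p dvd (p choose Suc (Suc j))" by (rule dvd_choose_prime) (use j p in auto)
  then obtain c where c: "p choose Suc (Suc j) = p * c" by blast
  have "(g ^^ Suc j) x [^] (p choose Suc (Suc j)) = ((g ^^ Suc j) x [^] p) [^] c"
    unfolding c by (rule nat_pow_pow[symmetric]) (rule funpow_closed[OF g x])
  also have "(g ^^ Suc j) x [^] p = (g ^^ j) (g (x [^] p))"
    using hom_nat_pow[OF hom_funpow[OF g] x is_group is_group, of "Suc j" p]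
    by (simp add: funpow_swap1)
  finally have eq: "(g ^^ Suc j) x [^] (p choose Suc (Suc j)) = (g ^^ j) (g (x [^] p)) [^] c" .
  have "(g ^^ j) (g (x [^] p)) \<in> H"
    by (induction j) (use H_inv xp g_def in auto)
  then have "(g ^^ Suc j) x [^] (p choose Suc (Suc j)) \<in> H"
    unfolding eq by (rule subgroup_nat_pow_closed[OF H])
  then show ?thesis by (simp add: g_def)
qed

lemma orbit_sum_prime_mod_subgroup:
  assumes f: "f \<in> hom G G" and x: "x \<in> carrier G"
    and p: "Factorial_Ring.prime (p::nat)" and p3: "3 \<le> p"
    and H: "subgroup H G" and H_inv: "diff_id G f ` H \<subseteq> H"
    and xp: "diff_id G f (x [^] p) \<in> H"
  shows "orbit_sum G f p x \<otimes> inv (x [^] p \<otimes> (diff_id G f ^^ (p - 1)) x) \<in> H"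
proof -
  define g where "g = diff_id G f"
  have g: "g \<in> hom G G" using diff_id_hom[OF f] g_def by simp
  have gc: "\<And>j. (g ^^ j) x \<in> carrier G" using funpow_closed[OF g x] .
  obtain s where ps: "p = Suc (Suc (Suc s))" using p3 by (intro that[of "p - 3"]) simp
  define T where "T j = (g ^^ j) x [^] (p choose Suc j)" for j
  have Tc: "T \<in> I \<rightarrow> carrier G" for I using gc by (auto simp: T_def)
  define R where "R = (\<Otimes>j\<in>{..s}. T (Suc j))"
  have RH: "R \<in> H" unfolding R_def T_def g_def
    by (rule subgroup_finprod_atMost[OF H])
       (rule binomial_term_mem_subgroup[OF f x p H H_inv xp]; use ps in simp)
  have Rc: "R \<in> carrier G" using RH subgroup.subset[OF H] by auto
  have "orbit_sum G f p x = (\<Otimes>j\<in>{..p}. T j)"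
    using orbit_sum_binomial[OF f x] by (simp add: T_def g_def)
  also have "\<dots> = T p \<otimes> (T (Suc (Suc s)) \<otimes> (R \<otimes> T 0))"
  proof -
    have "(\<Otimes>j\<in>{..Suc s}. T j) = R \<otimes> T 0"
      unfolding R_def using Tc by (rule finprod_Suc2)
    then show ?thesis unfolding ps using Tc by simp
  qed
  also have "T p = \<one>" by (simp add: T_def gc binomial_eq_0)
  also have "T (Suc (Suc s)) = (g ^^ (p - 1)) x" using gc[of "Suc (Suc s)"] by (simp add: T_def ps)
  also have "T 0 = x [^] p" by (simp add: T_def)
  finally have "orbit_sum G f p x = R \<otimes> (x [^] p \<otimes> (g ^^ (p - 1)) x)"
    using gc x Rc by (simp add: m_ac)
  then have "orbit_sum G f p x \<otimes> inv (x [^] p \<otimes> (g ^^ (p - 1)) x) = R"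
    using gc x Rc by (simp add: m_assoc)
  then show ?thesis using RH g_def by simp
qed

lemma orbit_sum_prime_Omega_one:
  assumes f: "f \<in> hom G G" and p: "Factorial_Ring.prime (p::nat)" and p3: "3 \<le> p"
    and x: "x \<in> Omega G p 1"
  shows "orbit_sum G f p x = (diff_id G f ^^ (p - 1)) x"
proof -
  define g where "g = diff_id G f"
  have g: "g \<in> hom G G" using diff_id_hom[OF f] g_def by simp
  have xc: "x \<in> carrier G" and xp: "x [^] p = \<one>" using x by (auto simp: Omega_def)
  have "orbit_sum G f p x \<otimes> inv (x [^] p \<otimes> (g ^^ (p - 1)) x) \<in> {\<one>}"
    by (rule orbit_sum_prime_mod_subgroup[OF f xc p p3 triv_subgroup, folded g_def])
       (use hom_one[OF g is_group is_group] xp in auto)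
  then have "orbit_sum G f p x \<otimes> inv ((g ^^ (p - 1)) x) = \<one>"
    using xp funpow_closed[OF g xc] by simp
  then show ?thesis
    using funpow_closed[OF g xc] orbit_sum_closed[OF f xc] g_def
      inv_solve_right'[of \<one> "orbit_sum G f p x" "(g ^^ (p - 1)) x"] by simp
qed

lemma funpow_prime_Omega_one:
  assumes f: "f \<in> hom G G" and p: "Factorial_Ring.prime (p::nat)" and p3: "3 \<le> p"
    and x: "x \<in> Omega G p 1"
  shows "(f ^^ p) x = x \<otimes> (diff_id G f ^^ p) x"
proof -
  have "(diff_id G f ^^ p) x = diff_id G f ((diff_id G f ^^ (p - 1)) x)"
    using p3 by (metis Suc_diff_1 comp_apply funpow.simps(2) less_le_trans zero_less_numeral)
  then show ?thesis
    using funpow_eq_orbit_sum[OF f] orbit_sum_prime_Omega_one[OF f p p3 x] x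
    by (simp add: Omega_def)
qed

lemma diff_id_nilpotent_Omega_one:
  assumes f: "f \<in> hom G G" and p: "Factorial_Ring.prime (p::nat)" and p3: "3 \<le> p"
    and f_id: "\<forall>x\<in>carrier G. (f ^^ (p ^ N)) x = x"
    and x: "x \<in> Omega G p 1"
  shows "(diff_id G f ^^ (p ^ N)) x = \<one>"
proof -
  define g where "g = diff_id G f"
  have g: "g \<in> hom G G" using diff_id_hom[OF f] g_def by simp
  define E where "E = Omega G p 1"
  have E_inv: "\<forall>y\<in>E. (g ^^ k) y \<in> E" for k
    using hom_Omega[OF hom_funpow[OF g]] E_def by blast
  have "\<forall>y\<in>E. (g ^^ (p ^ K)) y = diff_id G (f ^^ (p ^ K)) y" for K
  proof (induction K)
    case 0
    then show ?case by (simp add: g_def)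
  next
    case (Suc K)
    define h where "h = f ^^ (p ^ K)"
    have h: "h \<in> hom G G" using hom_funpow[OF f] h_def by simp
    show ?case
    proof
      fix y assume y: "y \<in> E"
      have yc: "y \<in> carrier G" using y E_def by (auto simp: Omega_def)
      have "(g ^^ (p ^ Suc K)) y = ((g ^^ (p ^ K)) ^^ p) y"
        by (simp add: funpow_mult mult.commute)
      also have "\<dots> = (diff_id G h ^^ p) y"
        unfolding h_def by (rule funpow_eq_on[of E]) (use Suc.IH E_inv y in blast)+
      also have "\<dots> = (h ^^ p) y \<otimes> inv y"
        using funpow_prime_Omega_one[OF h p p3] y E_def funpow_closed[OF diff_id_hom[OF h] yc] yc
        by (simp add: m_comm[of y] m_assoc)
      also have "(h ^^ p) y = (f ^^ (p ^ Suc K)) y"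
        by (simp add: h_def funpow_mult mult.commute)
      finally show "(g ^^ (p ^ Suc K)) y = diff_id G (f ^^ (p ^ Suc K)) y"
        by (simp add: diff_id_def)
    qed
  qed
  then show ?thesis using f_id x E_def g_def by (auto simp: diff_id_def Omega_def)
qed

lemma orbit_sum_prime_ne_one:
  assumes f: "f \<in> hom G G" and p: "Factorial_Ring.prime (p::nat)" and p3: "3 \<le> p"
    and H: "subgroup H G" and H_inv: "diff_id G f ` H \<subseteq> H"
    and z: "z \<in> carrier G" and zp: "z [^] p \<notin> H" and zp_diff: "diff_id G f (z [^] p) \<in> H"
    and z_top: "(diff_id G f ^^ (p - 1)) z \<in> H"
  shows "orbit_sum G f p z \<noteq> \<one>"
proof
  define v where "v = (diff_id G f ^^ (p - 1)) z"
  have vc: "v \<in> carrier G" using funpow_closed[OF diff_id_hom[OF f] z] v_def by simp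
  assume "orbit_sum G f p z = \<one>"
  then have "inv (z [^] p \<otimes> v) \<in> H"
    using orbit_sum_prime_mod_subgroup[OF f z p p3 H H_inv zp_diff] v_def vc z by simp
  then have "z [^] p \<otimes> v \<in> H"
    using subgroup.m_inv_closed[OF H] z vc by fastforce
  then have "(z [^] p \<otimes> v) \<otimes> inv v \<in> H"
    using subgroup.m_closed[OF H] subgroup.m_inv_closed[OF H] z_top v_def by blast
  then show False using zp z vc by (simp add: m_assoc)
qed

lemma funpow_mem_funpow_image:
  assumes g: "g \<in> hom G G" and nil: "(g ^^ m) ` Omega G p 1 = {\<one>}"
    and z: "z \<in> carrier G" and zp: "z [^] p \<in> (g ^^ d) ` Omega G p 1" and "d \<le> m"
  shows "(g ^^ (m - d + l)) z \<in> (g ^^ l) ` Omega G p 1"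
proof -
  obtain u where u: "u \<in> Omega G p 1" and zp_u: "z [^] p = (g ^^ d) u" using zp by blast
  have "(g ^^ (m - d)) z [^] p = (g ^^ (m - d)) (z [^] p)"
    using hom_nat_pow[OF hom_funpow[OF g] z is_group is_group] by simp
  also have "\<dots> = (g ^^ m) u"
    using \<open>d \<le> m\<close> funpow_add[of "m - d" d g] by (simp add: zp_u)
  also have "\<dots> = \<one>" using nil u by blast
  finally have "(g ^^ (m - d)) z \<in> Omega G p 1"
    using funpow_closed[OF g z] by (simp add: Omega_def)
  moreover have "(g ^^ (m - d + l)) z = (g ^^ l) ((g ^^ (m - d)) z)"
    by (simp add: funpow_add add.commute)
  ultimately show ?thesis by blast
qed

lemma funpow_image_Omega_antimono:
  assumes "g \<in> hom G G" and "k \<le> l"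
  shows "(g ^^ l) ` Omega G p i \<subseteq> (g ^^ k) ` Omega G p i"
proof -
  have "g ` Omega G p i \<subseteq> Omega G p i"
    using hom_Omega[OF assms(1)] by (simp add: image_subset_iff)
  then show ?thesis using assms(2) by (rule funpow_image_antimono)
qed

lemma orbit_sum_prime_Omega_one_eq_one:
  assumes f: "f \<in> hom G G" and p: "Factorial_Ring.prime (p::nat)" and m: "1 \<le> m" "m + 2 \<le> p"
    and nil: "(diff_id G f ^^ m) ` Omega G p 1 = {\<one>}" and y: "y \<in> Omega G p 1"
  shows "orbit_sum G f p y = \<one>"
proof -
  have "m \<le> p - 1" using m by simp
  then have "(diff_id G f ^^ (p - 1)) ` Omega G p 1 \<subseteq> (diff_id G f ^^ m) ` Omega G p 1"
    by (rule funpow_image_Omega_antimono[OF diff_id_hom[OF f]])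
  then have "(diff_id G f ^^ (p - 1)) y \<in> (diff_id G f ^^ m) ` Omega G p 1" using y by blast
  then show ?thesis using orbit_sum_prime_Omega_one[OF f p _ y] nil m by simp
qed

lemma orbit_sum_prime_root_ne_one:
  assumes f: "f \<in> hom G G" and p: "Factorial_Ring.prime (p::nat)" and m: "1 \<le> m" "m + 2 \<le> p"
    and nil: "(diff_id G f ^^ m) ` Omega G p 1 = {\<one>}"
    and z: "z \<in> carrier G" and y: "z [^] p \<in> Omega G p 1" "z [^] p \<noteq> \<one>"
  shows "orbit_sum G f p z \<noteq> \<one>"
proof -
  define g where "g = diff_id G f"
  define W where "W k = (g ^^ k) ` Omega G p 1" for k
  have g: "g \<in> hom G G" using diff_id_hom[OF f] g_def by simp
  have W_anti: "W l \<subseteq> W k" if "k \<le> l" for k l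
    unfolding W_def using funpow_image_Omega_antimono[OF g that] .
  have W_Suc: "g ` W k = W (Suc k)" for k
    by (simp add: W_def image_comp)
  have "z [^] p \<notin> W m" using nil y by (simp add: W_def g_def)
  then obtain d where d: "d < m" "z [^] p \<in> W d" "z [^] p \<notin> W (Suc d)"
    using ex_boundary_step[of "\<lambda>d. z [^] p \<in> W d" m] y(1) by (auto simp: W_def)
  have H: "subgroup (W (Suc d)) G"
    unfolding W_def by (rule subgroup_funpow_image[OF g subgroup_Omega])
  have H_inv: "g ` W (Suc d) \<subseteq> W (Suc d)"
    using W_Suc[of "Suc d"] W_anti[of "Suc d" "Suc (Suc d)"] by simp
  have "g (z [^] p) \<in> W (Suc d)" using W_Suc[of d] d(2) by blast
  \<comment> \<open>This is where p \<ge> m + 2 is needed.\<close>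
  moreover have "(g ^^ (p - 1)) z \<in> W (Suc d)"
  proof -
    have "m - d + (p - 1 - (m - d)) = p - 1" using m d(1) by simp
    then have "(g ^^ (p - 1)) z \<in> W (p - 1 - (m - d))"
      using funpow_mem_funpow_image[OF g nil[folded g_def] z, of d "p - 1 - (m - d)"] d
      by (simp add: W_def)
    moreover have "W (p - 1 - (m - d)) \<subseteq> W (Suc d)" using m d(1) by (intro W_anti) simp
    ultimately show ?thesis by blast
  qed
  ultimately show ?thesis
    using orbit_sum_prime_ne_one[OF f p _ H, folded g_def, OF _ H_inv z d(3)] m by simp
qed

lemma orbit_sum_prime_Omega:
  assumes f: "f \<in> hom G G" and p: "Factorial_Ring.prime (p::nat)"
    and m: "1 \<le> m" "m + 2 \<le> p" and nil: "(diff_id G f ^^ m) ` Omega G p 1 = {\<one>}"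
    and i: "1 \<le> i" and a: "a \<in> Omega G p (i + 1) - Omega G p i"
  shows "orbit_sum G f p a \<in> Omega G p i - Omega G p (i - 1)"
proof -
  have ac: "a \<in> carrier G" and a_pow: "a [^] (p ^ i * p) = \<one>" "a [^] (p ^ i) \<noteq> \<one>"
    using a by (auto simp: Omega_def mult.commute)
  have y: "a [^] (p ^ i) \<in> Omega G p 1"
    using ac a_pow by (simp add: Omega_def nat_pow_pow)
  have "p ^ (i - 1) * p = p ^ i" using i by (simp add: power_Suc2[symmetric])
  then have z: "(a [^] (p ^ (i - 1))) [^] p = a [^] (p ^ i)" using ac by (simp add: nat_pow_pow)
  have "orbit_sum G f p (a [^] (p ^ i)) = \<one>"
    by (rule orbit_sum_prime_Omega_one_eq_one[OF f p m nil y])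
  moreover have "orbit_sum G f p (a [^] (p ^ (i - 1))) \<noteq> \<one>"
    by (rule orbit_sum_prime_root_ne_one[OF f p m nil]) (use ac y a_pow z in simp_all)
  ultimately show ?thesis
    using orbit_sum_nat_pow[OF f ac] orbit_sum_closed[OF f ac] by (simp add: Omega_def)
qed

end

section \<open>The \<lambda>-map of a left brace\<close>

lemma left_braceD:
  assumes "left_brace A M"
  shows "comm_group A" and "group M" and "carrier M = carrier A"
    and "\<lbrakk>a \<in> carrier A; b \<in> carrier A; c \<in> carrier A\<rbrakk> \<Longrightarrow>
           (a \<otimes>\<^bsub>M\<^esub> (b \<otimes>\<^bsub>A\<^esub> c)) \<otimes>\<^bsub>A\<^esub> a
             = (a \<otimes>\<^bsub>M\<^esub> b) \<otimes>\<^bsub>A\<^esub> (a \<otimes>\<^bsub>M\<^esub> c)"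
  using assms by (auto simp: left_brace_def)

definition brace_lambda :: "('a, 'b) monoid_scheme \<Rightarrow> ('a, 'c) monoid_scheme \<Rightarrow> 'a \<Rightarrow> 'a \<Rightarrow> 'a" where
  "brace_lambda A M a x = (a \<otimes>\<^bsub>M\<^esub> x) \<otimes>\<^bsub>A\<^esub> inv\<^bsub>A\<^esub> a"

lemma brace_mult_closed:
  "left_brace A M \<Longrightarrow> a \<in> carrier A \<Longrightarrow> b \<in> carrier A \<Longrightarrow> a \<otimes>\<^bsub>M\<^esub> b \<in> carrier A"
  using monoid.m_closed[OF group.is_monoid[OF left_braceD(2)]] left_braceD(3) by metis

lemma brace_mult_zero:
  assumes lb: "left_brace A M" and x: "x \<in> carrier A"
  shows "x \<otimes>\<^bsub>M\<^esub> \<one>\<^bsub>A\<^esub> = x"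
proof -
  interpret A: comm_group A by (rule left_braceD(1)[OF lb])
  have u: "x \<otimes>\<^bsub>M\<^esub> \<one>\<^bsub>A\<^esub> \<in> carrier A" using brace_mult_closed[OF lb x] by simp
  have "(x \<otimes>\<^bsub>M\<^esub> \<one>\<^bsub>A\<^esub>) \<otimes>\<^bsub>A\<^esub> x
      = (x \<otimes>\<^bsub>M\<^esub> \<one>\<^bsub>A\<^esub>) \<otimes>\<^bsub>A\<^esub> (x \<otimes>\<^bsub>M\<^esub> \<one>\<^bsub>A\<^esub>)"
    using left_braceD(4)[OF lb x, of "\<one>\<^bsub>A\<^esub>" "\<one>\<^bsub>A\<^esub>"] by simp
  then show ?thesis using A.l_cancel[OF _ x u u] by simp
qed

lemma brace_one: assumes lb: "left_brace A M" shows "\<one>\<^bsub>M\<^esub> = \<one>\<^bsub>A\<^esub>"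
proof -
  interpret A: comm_group A by (rule left_braceD(1)[OF lb])
  interpret M: group M by (rule left_braceD(2)[OF lb])
  have "\<one>\<^bsub>M\<^esub> \<in> carrier A" using left_braceD(3)[OF lb] by auto
  moreover have "\<one>\<^bsub>M\<^esub> \<otimes>\<^bsub>M\<^esub> \<one>\<^bsub>A\<^esub> = \<one>\<^bsub>A\<^esub>"
    using left_braceD(3)[OF lb] M.l_one[of "\<one>\<^bsub>A\<^esub>"] by simp
  ultimately show ?thesis using brace_mult_zero[OF lb] by metis
qed

lemma brace_lambda_hom:
  assumes lb: "left_brace A M" and b: "b \<in> carrier A"
  shows "brace_lambda A M b \<in> hom A A"
proof -
  interpret A: comm_group A by (rule left_braceD(1)[OF lb])
  have "brace_lambda A M b (x \<otimes>\<^bsub>A\<^esub> y) = brace_lambda A M b x \<otimes>\<^bsub>A\<^esub> brace_lambda A M b y"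
    if x: "x \<in> carrier A" and y: "y \<in> carrier A" for x y
  proof -
    have c1: "b \<otimes>\<^bsub>M\<^esub> (x \<otimes>\<^bsub>A\<^esub> y) \<in> carrier A"
      using brace_mult_closed[OF lb b] x y by simp
    have c2: "b \<otimes>\<^bsub>M\<^esub> x \<in> carrier A" "b \<otimes>\<^bsub>M\<^esub> y \<in> carrier A"
      using brace_mult_closed[OF lb b] x y by auto
    have "b \<otimes>\<^bsub>M\<^esub> (x \<otimes>\<^bsub>A\<^esub> y)
        = ((b \<otimes>\<^bsub>M\<^esub> x) \<otimes>\<^bsub>A\<^esub> (b \<otimes>\<^bsub>M\<^esub> y)) \<otimes>\<^bsub>A\<^esub> inv\<^bsub>A\<^esub> b"
      using A.inv_solve_right[OF c1 _ b] c2 left_braceD(4)[OF lb b x y] by simp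
    then show ?thesis unfolding brace_lambda_def using c2 b by (simp add: A.m_ac A.inv_mult)
  qed
  moreover have "brace_lambda A M b x \<in> carrier A" if "x \<in> carrier A" for x
    unfolding brace_lambda_def using brace_mult_closed[OF lb b that] b by simp
  ultimately show ?thesis unfolding hom_def by auto
qed

lemma brace_lambda_mult:
  assumes lb: "left_brace A M" and b: "b \<in> carrier A" and c: "c \<in> carrier A"
    and x: "x \<in> carrier A"
  shows "brace_lambda A M (b \<otimes>\<^bsub>M\<^esub> c) x = brace_lambda A M b (brace_lambda A M c x)"
proof -
  interpret A: comm_group A by (rule left_braceD(1)[OF lb])
  interpret M: group M by (rule left_braceD(2)[OF lb])
  let ?l = "brace_lambda A M b"
  have h: "group_hom A A ?l"
    using brace_lambda_hom[OF lb b] by (simp add: group_hom_def group_hom_axioms_def A.is_group)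
  have cx: "c \<otimes>\<^bsub>M\<^esub> x \<in> carrier A" and bc: "b \<otimes>\<^bsub>M\<^esub> c \<in> carrier A"
    and bcx: "b \<otimes>\<^bsub>M\<^esub> (c \<otimes>\<^bsub>M\<^esub> x) \<in> carrier A"
    using brace_mult_closed[OF lb] b c x by auto
  have "?l (brace_lambda A M c x) = ?l (c \<otimes>\<^bsub>M\<^esub> x) \<otimes>\<^bsub>A\<^esub> inv\<^bsub>A\<^esub> (?l c)"
    unfolding brace_lambda_def[of A M c x]
    using hom_mult[OF brace_lambda_hom[OF lb b] cx] group_hom.hom_inv[OF h c] c by simp
  also have "\<dots> = (b \<otimes>\<^bsub>M\<^esub> (c \<otimes>\<^bsub>M\<^esub> x)) \<otimes>\<^bsub>A\<^esub> inv\<^bsub>A\<^esub> (b \<otimes>\<^bsub>M\<^esub> c)"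
    unfolding brace_lambda_def using bcx bc b
    by (simp add: A.inv_mult A.m_ac) (simp add: A.m_assoc[symmetric])
  also have "b \<otimes>\<^bsub>M\<^esub> (c \<otimes>\<^bsub>M\<^esub> x) = (b \<otimes>\<^bsub>M\<^esub> c) \<otimes>\<^bsub>M\<^esub> x"
    using M.m_assoc left_braceD(3)[OF lb] b c x by simp
  finally show ?thesis unfolding brace_lambda_def by simp
qed

lemma brace_lambda_one:
  assumes lb: "left_brace A M" and x: "x \<in> carrier A"
  shows "brace_lambda A M \<one>\<^bsub>M\<^esub> x = x"
proof -
  interpret A: comm_group A by (rule left_braceD(1)[OF lb])
  interpret M: group M by (rule left_braceD(2)[OF lb])
  have "\<one>\<^bsub>M\<^esub> \<otimes>\<^bsub>M\<^esub> x = x" using x left_braceD(3)[OF lb] by simp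
  then show ?thesis unfolding brace_lambda_def using x brace_one[OF lb] by simp
qed

lemma brace_mult_eq_lambda:
  assumes lb: "left_brace A M" and b: "b \<in> carrier A" and x: "x \<in> carrier A"
  shows "b \<otimes>\<^bsub>M\<^esub> x = b \<otimes>\<^bsub>A\<^esub> brace_lambda A M b x"
proof -
  interpret A: comm_group A by (rule left_braceD(1)[OF lb])
  have bx: "b \<otimes>\<^bsub>M\<^esub> x \<in> carrier A" using brace_mult_closed[OF lb b x] .
  have "b \<otimes>\<^bsub>A\<^esub> ((b \<otimes>\<^bsub>M\<^esub> x) \<otimes>\<^bsub>A\<^esub> inv\<^bsub>A\<^esub> b)
      = (b \<otimes>\<^bsub>M\<^esub> x) \<otimes>\<^bsub>A\<^esub> (b \<otimes>\<^bsub>A\<^esub> inv\<^bsub>A\<^esub> b)"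
    using bx b by (intro A.m_lcomm) auto
  then show ?thesis unfolding brace_lambda_def using bx b by simp
qed

lemma funpow_brace_lambda:
  assumes lb: "left_brace A M" and a: "a \<in> carrier A" and x: "x \<in> carrier A"
  shows "(brace_lambda A M a ^^ n) x = brace_lambda A M (a [^]\<^bsub>M\<^esub> n) x"
  using x
proof (induction n arbitrary: x)
  case 0
  then show ?case using brace_lambda_one[OF lb] by simp
next
  case (Suc n)
  have an: "a [^]\<^bsub>M\<^esub> n \<in> carrier A"
    using left_braceD(3)[OF lb] a monoid.nat_pow_closed[OF group.is_monoid[OF left_braceD(2)[OF lb]]]
    by metis
  have "(brace_lambda A M a ^^ Suc n) x = (brace_lambda A M a ^^ n) (brace_lambda A M a x)"
    by (simp add: funpow_swap1)
  also have "\<dots> = brace_lambda A M (a [^]\<^bsub>M\<^esub> n) (brace_lambda A M a x)"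
    using Suc hom_in_carrier[OF brace_lambda_hom[OF lb a]] by simp
  also have "\<dots> = brace_lambda A M (a [^]\<^bsub>M\<^esub> Suc n) x"
    using brace_lambda_mult[OF lb an a Suc.prems] by simp
  finally show ?case .
qed

lemma brace_pow_eq_orbit_sum:
  assumes lb: "left_brace A M" and a: "a \<in> carrier A"
  shows "a [^]\<^bsub>M\<^esub> n = orbit_sum A (brace_lambda A M a) n a"
proof (induction n)
  case 0
  then show ?case using brace_one[OF lb] by simp
next
  case (Suc n)
  have an: "a [^]\<^bsub>M\<^esub> n \<in> carrier A"
    using left_braceD(3)[OF lb] a monoid.nat_pow_closed[OF group.is_monoid[OF left_braceD(2)[OF lb]]]
    by metis
  have "a [^]\<^bsub>M\<^esub> Suc n = a [^]\<^bsub>M\<^esub> n \<otimes>\<^bsub>A\<^esub> brace_lambda A M (a [^]\<^bsub>M\<^esub> n) a"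
    using brace_mult_eq_lambda[OF lb an a] by simp
  then show ?case using Suc funpow_brace_lambda[OF lb a a] by simp
qed

lemma funpow_brace_lambda_card:
  assumes lb: "left_brace A M" and fin: "finite (carrier A)"
    and a: "a \<in> carrier A" and x: "x \<in> carrier A"
  shows "(brace_lambda A M a ^^ card (carrier A)) x = x"
proof -
  have "a [^]\<^bsub>M\<^esub> card (carrier A) = \<one>\<^bsub>M\<^esub>"
    using group.pow_order_eq_1[OF left_braceD(2)[OF lb]] a left_braceD(3)[OF lb] fin
    unfolding order_def by metis
  then show ?thesis using funpow_brace_lambda[OF lb a x] brace_lambda_one[OF lb x] by simp
qed

section \<open>Torsion of a product of cyclic p-groups\<close>

lemma nat_pow_product_group:
  assumes "f \<in> carrier (product_group I G)"
  shows "f [^]\<^bsub>product_group I G\<^esub> (n::nat) = (\<lambda>k\<in>I. f k [^]\<^bsub>G k\<^esub> n)"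
  by (induction n) (use assms in \<open>auto simp: PiE_def\<close>)

lemma card_product_integer_mod_group:
  assumes "0 < (p::nat)" and "finite I"
  shows "card (carrier (product_group I (\<lambda>k. integer_mod_group (p ^ \<alpha> k)))) = (\<Prod>k\<in>I. p ^ \<alpha> k)"
proof -
  have "card (carrier (integer_mod_group (p ^ \<alpha> k))) = p ^ \<alpha> k" for k
    using assms by (simp add: carrier_integer_mod_group del: of_nat_power)
  then show ?thesis unfolding carrier_product_group using assms(2) by (subst card_PiE) simp_all
qed

lemma Omega_one_integer_mod_group:
  fixes p :: nat
  assumes p: "0 < p" and \<alpha>: "1 \<le> \<alpha>" and x: "x \<in> Omega (integer_mod_group (p ^ \<alpha>)) p 1"
  defines "c \<equiv> int (p ^ (\<alpha> - 1))"
  shows "x = c * (x div c)" and "x div c \<in> {0..<int p}"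
proof -
  have pc: "int (p ^ \<alpha>) = int p * c"
    using \<alpha> by (simp add: c_def power_eq_if[of p \<alpha>])
  have c_pos: "0 < c" using p by (simp add: c_def)
  have range: "0 \<le> x" "x < int p * c"
    using x p pc by (auto simp: Omega_def carrier_integer_mod_group simp del: of_nat_power)
  have "(int p * x) mod (int p * c) = 0"
    using x pc by (simp add: Omega_def)
  then have "c dvd x" using p by (simp add: mod_eq_0_iff_dvd)
  then show x_eq: "x = c * (x div c)" by simp
  have "c * (x div c) < c * int p" using range(2) x_eq by (simp add: mult.commute)
  then show "x div c \<in> {0..<int p}"
    using c_pos range(1) by (simp add: pos_imp_zdiv_nonneg_iff)
qed

text \<open>Dividing the k-th coordinate by p^(\<alpha> k - 1) embeds the p-torsion of the product into
  {0..<p}^m.\<close>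

lemma card_Omega_one_product_integer_mod_group:
  assumes p: "0 < (p::nat)" and \<alpha>: "\<forall>k\<in>{1..m}. 1 \<le> \<alpha> k"
  shows "card (Omega (product_group {1..m} (\<lambda>k. integer_mod_group (p ^ \<alpha> k))) p 1) \<le> p ^ m"
proof -
  define P where "P = product_group {1..m} (\<lambda>k. integer_mod_group (p ^ \<alpha> k))"
  define c where "c k = int (p ^ (\<alpha> k - 1))" for k
  define \<psi> where "\<psi> f = (\<lambda>k\<in>{1..m}. f k div c k)" for f :: "nat \<Rightarrow> int"
  have coord: "f k \<in> Omega (integer_mod_group (p ^ \<alpha> k)) p 1"
    if f: "f \<in> Omega P p 1" and k: "k \<in> {1..m}" for f k
  proof -
    have fc: "f \<in> carrier P" and "f [^]\<^bsub>P\<^esub> p = \<one>\<^bsub>P\<^esub>" using f by (auto simp: Omega_def)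
    then have "(f [^]\<^bsub>P\<^esub> p) k = \<one>\<^bsub>P\<^esub> k" by simp
    then show ?thesis
      using nat_pow_product_group[OF fc[unfolded P_def]] fc k by (auto simp: P_def Omega_def)
  qed
  have "inj_on \<psi> (Omega P p 1)"
  proof
    fix f g assume f: "f \<in> Omega P p 1" and g: "g \<in> Omega P p 1" and eq: "\<psi> f = \<psi> g"
    show "f = g"
    proof
      fix k
      show "f k = g k"
      proof (cases "k \<in> {1..m}")
        case True
        then have "f k div c k = g k div c k" using fun_cong[OF eq, of k] by (simp add: \<psi>_def)
        then show ?thesis
          using Omega_one_integer_mod_group(1)[OF p _ coord] \<alpha> f g True c_def by metis
      next
        case False
        then show ?thesis using f g by (auto simp: P_def Omega_def PiE_def extensional_def)
      qed
    qed
  qed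
  moreover have "\<psi> ` Omega P p 1 \<subseteq> (\<Pi>\<^sub>E k\<in>{1..m}. {0..<int p})"
    using Omega_one_integer_mod_group(2)[OF p _ coord] \<alpha> by (auto simp: \<psi>_def c_def)
  ultimately have "card (Omega P p 1) \<le> card (\<Pi>\<^sub>E k\<in>{1..m}. {0..<int p})"
    by (intro card_inj_on_le) (simp_all add: finite_PiE)
  also have "\<dots> = p ^ m" by (simp add: card_PiE)
  finally show ?thesis unfolding P_def .
qed

lemma card_Omega_le_iso:
  assumes "\<phi> \<in> iso G H" and "group G" and "group H" and "finite (carrier H)"
  shows "card (Omega G p i) \<le> card (Omega H p i)"
proof (rule card_inj_on_le)
  show "inj_on \<phi> (Omega G p i)"
    using iso_imp_homomorphism[OF assms(1)] assms(1)
    by (auto simp: iso_def bij_betw_def Omega_def intro: inj_on_subset)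
  have hom: "\<phi> \<in> hom G H" using assms(1) by (simp add: iso_def)
  show "\<phi> ` Omega G p i \<subseteq> Omega H p i"
  proof
    fix y assume "y \<in> \<phi> ` Omega G p i"
    then obtain x where x: "x \<in> carrier G" "x [^]\<^bsub>G\<^esub> (p ^ i) = \<one>\<^bsub>G\<^esub>" and y: "y = \<phi> x"
      by (auto simp: Omega_def)
    have "\<phi> x [^]\<^bsub>H\<^esub> (p ^ i) = \<phi> (x [^]\<^bsub>G\<^esub> (p ^ i))"
      using hom_nat_pow[OF hom x(1) assms(2,3)] by simp
    also have "\<dots> = \<one>\<^bsub>H\<^esub>" using x(2) hom_one[OF hom assms(2,3)] by simp
    finally show "y \<in> Omega H p i" using y hom_in_carrier[OF hom x(1)] by (simp add: Omega_def)
  qed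
  show "finite (Omega H p i)" using assms(4) by (simp add: Omega_def)
qed

lemma card_iso_product_integer_mod_group:
  fixes p m :: nat
  assumes "G \<cong> product_group {1..m} (\<lambda>k. integer_mod_group (p ^ \<alpha> k))" and "0 < p"
  shows "card (carrier G) = p ^ (\<Sum>k\<in>{1..m}. \<alpha> k)"
  using iso_same_card[OF assms(1)] card_product_integer_mod_group[OF assms(2), of "{1..m}" \<alpha>]
  by (simp add: power_sum del: carrier_product_group)

lemma card_Omega_one_iso_product_integer_mod_group:
  fixes p m :: nat
  assumes "group G" and "G \<cong> product_group {1..m} (\<lambda>k. integer_mod_group (p ^ \<alpha> k))"
    and "0 < p" and "\<forall>k\<in>{1..m}. 1 \<le> \<alpha> k" and "finite (carrier G)"
  shows "card (Omega G p 1) \<le> p ^ m"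
proof -
  define P where "P = product_group {1..m} (\<lambda>k. integer_mod_group (p ^ \<alpha> k))"
  obtain \<phi> where \<phi>: "\<phi> \<in> iso G P" using assms(2) unfolding is_iso_def P_def by blast
  have "card (Omega G p 1) \<le> card (Omega P p 1)"
    using card_Omega_le_iso[OF \<phi> assms(1)] iso_finite[OF assms(2)] assms(5)
    by (simp add: P_def product_group)
  also have "\<dots> \<le> p ^ m"
    unfolding P_def by (rule card_Omega_one_product_integer_mod_group[OF assms(3,4)])
  finally show ?thesis .
qed

theorem mainTheorem6:
  fixes A :: "('a, 'b) monoid_scheme" and M :: "('a, 'c) monoid_scheme"
    and p m :: nat and \<alpha> :: "nat \<Rightarrow> nat"
  assumes "Factorial_Ring.prime p" and "m \<ge> 1" and "m + 2 \<le> p"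
    and "left_brace A M" and "finite (carrier A)"
    and "\<forall>k\<in>{1..m}. 1 \<le> \<alpha> k"
    and "\<forall>k\<in>{1..m}. \<forall>l\<in>{1..m}. k \<le> l \<longrightarrow> \<alpha> k \<le> \<alpha> l"
    and "A \<cong> product_group {1..m} (\<lambda>k. integer_mod_group (p ^ \<alpha> k))"
  shows "\<forall>i \<ge> 1. \<forall>a \<in> Omega A p (i + 1) - Omega A p i.
           a [^]\<^bsub>M\<^esub> p \<in> Omega A p i - Omega A p (i - 1)"
proof (intro allI impI ballI)
  note p = assms(1) and lb = assms(4) and fin = assms(5)
  interpret A: comm_group A by (rule left_braceD(1)[OF lb])
  have p_pos: "0 < p" using prime_gt_0_nat[OF p] .
  have card_A: "card (carrier A) = p ^ (\<Sum>k\<in>{1..m}. \<alpha> k)"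
    using card_iso_product_integer_mod_group[OF assms(8) p_pos] .
  have card_Omega: "card (Omega A p 1) \<le> p ^ m"
    using card_Omega_one_iso_product_integer_mod_group[OF A.is_group assms(8) p_pos assms(6) fin] .
  fix i a assume i: "1 \<le> i" and a: "a \<in> Omega A p (i + 1) - Omega A p i"
  have ac: "a \<in> carrier A" using a by (simp add: Omega_def)
  define f where "f = brace_lambda A M a"
  have f: "f \<in> hom A A" using brace_lambda_hom[OF lb ac] f_def by simp
  have "\<forall>x\<in>carrier A. (f ^^ p ^ (\<Sum>k\<in>{1..m}. \<alpha> k)) x = x"
    using funpow_brace_lambda_card[OF lb fin ac] card_A f_def by simp
  then have "\<forall>x\<in>Omega A p 1. (diff_id A f ^^ p ^ (\<Sum>k\<in>{1..m}. \<alpha> k)) x = \<one>\<^bsub>A\<^esub>"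
    using A.diff_id_nilpotent_Omega_one[OF f p] assms(2,3) by simp
  then have "(diff_id A f ^^ m) ` Omega A p 1 = {\<one>\<^bsub>A\<^esub>}"
    using A.funpow_image_eq_one[OF fin card_A p A.diff_id_hom[OF f] A.subgroup_Omega _ _ card_Omega]
      A.hom_Omega[OF A.diff_id_hom[OF f]] by blast
  then show "a [^]\<^bsub>M\<^esub> p \<in> Omega A p i - Omega A p (i - 1)"
    using A.orbit_sum_prime_Omega[OF f p assms(2,3) _ i a] brace_pow_eq_orbit_sum[OF lb ac] f_def
    by simp
qed

end
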